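(* Let $\alpha\in(0,1)$ and suppose: $\mathcal{S}_0$ is a VC-major class of measurable functions $\mathcal{X}^2\to[0,1]$ of finite VC dimension; there is $\kappa\in(0,1)$ with $\kappa\le p\le1-\kappa$ where $p=\sum_{k=1}^Kp_k^2$; there exist $c$ and $a\in[0,1]$ such that almost surely $\mathbb{E}_{X'}\big[|\eta(X,X')-Q^*_\alpha|^{-a}\big]\le c$; and $S^*\in\mathcal{S}_0$, where $S^*(x,x')=\mathbb{I}\{\eta(x,x')\ge Q^*_\alpha\}$. For $S\in\mathcal{S}_0$ define $$Q_S((x,y),(x',y'))=\mathbb{I}\{y=y'\}\big(S(x,x')-S^*(x,x')\big)-\mathbb{E}\big[\mathbb{I}\{Y=Y'\}(S(X,X')-S^*(X,X'))\big],$$ and $q_S(x,y)=\mathbb{E}[Q_S((X,Y),(x,y))]$. Then for any $S\in\mathcal{S}_0$, $$\mathrm{Var}(q_S(X,Y))\le c\Big[(1-Q^*_\alpha)\,p\,\big(R^+(S^* )-R^+(S)\big)+(1-p)\,Q^*_\alpha\big(R^-(S)-R^-(S^* )\big)\Big]^a.$$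
   Context: $(X,Y)$ is a random pair with $X\in\mathcal{X}\subset\mathbb{R}^d$, $Y\in\{1,\dots,K\}$, $p_k=\mathbb{P}\{Y=k\}>0$, $\eta_k(x)=\mathbb{P}\{Y=k\mid X=x\}$; $(X',Y')$ is an independent copy, $Z=2\mathbb{I}\{Y=Y'\}-1$, $\eta(x,x')=\sum_k\eta_k(x)\eta_k(x')$. Assume the conditional cdf of $\eta(X,X')$ given $Z=-1$ is invertible, and let $Q^*_\alpha$ be its quantile at level $1-\alpha$. $R^+(S)=\mathbb{E}[S(X,X')\mid Z=+1]$, $R^-(S)=\mathbb{E}[S(X,X')\mid Z=-1]$. $\mathbb{E}_{X'}$ denotes expectation with respect to $X'$ only. A class is VC-major if its family of strict superlevel sets is a VC class. *)

theory Defs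
  imports "HOL-Probability.Probability"
begin

definition shatters :: "'b set set \<Rightarrow> 'b set \<Rightarrow> bool" where
  "shatters C A \<longleftrightarrow> (\<forall>B\<subseteq>A. \<exists>U\<in>C. U \<inter> A = B)"

definition VC_class :: "'b set set \<Rightarrow> bool" where
  "VC_class C \<longleftrightarrow> (\<exists>n::nat. \<forall>A. finite A \<and> shatters C A \<longrightarrow> card A \<le> n)"

definition VC_major_on :: "'b set \<Rightarrow> ('b \<Rightarrow> real) set \<Rightarrow> bool" where
  "VC_major_on Om F \<longleftrightarrow> VC_class {{z \<in> Om. t < f z} | f t. f \<in> F}"

text \<open>D is the law of (X,Y) on MX x {1..K}; the independent copy is handled via D \<Otimes> D.
  A pair of observations is w = ((x,y),(x',y')).\<close>

definition pk :: "('a \<times> nat) measure \<Rightarrow> nat \<Rightarrow> real" where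
  "pk D k = measure D {z \<in> space D. snd z = k}"

definition pcoef :: "('a \<times> nat) measure \<Rightarrow> nat \<Rightarrow> real" where
  "pcoef D K = (\<Sum>k=1..K. (pk D k)\<^sup>2)"

definition cond_prob_version ::
  "'a measure \<Rightarrow> ('a \<times> nat) measure \<Rightarrow> nat \<Rightarrow> (nat \<Rightarrow> 'a \<Rightarrow> real) \<Rightarrow> bool" where
  "cond_prob_version MX D K eta \<longleftrightarrow>
     (\<forall>k\<in>{1..K}. eta k \<in> borel_measurable MX \<and> integrable (distr D MX fst) (eta k) \<and>
        (\<forall>A\<in>sets MX. measure D (A \<times> {k}) = (LINT x:A|distr D MX fst. eta k x)))"

definition eta2 :: "(nat \<Rightarrow> 'a \<Rightarrow> real) \<Rightarrow> nat \<Rightarrow> 'a \<Rightarrow> 'a \<Rightarrow> real" where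
  "eta2 eta K x x' = (\<Sum>k=1..K. eta k x * eta k x')"

definition same_label :: "('a \<times> nat) \<times> ('a \<times> nat) \<Rightarrow> bool" where
  "same_label w \<longleftrightarrow> snd (fst w) = snd (snd w)"

text \<open>Conditional cdf of eta(X,X') given Z = -1 (i.e. Y \<noteq> Y').\<close>
definition cdf_neg :: "('a \<times> nat) measure \<Rightarrow> (nat \<Rightarrow> 'a \<Rightarrow> real) \<Rightarrow> nat \<Rightarrow> real \<Rightarrow> real" where
  "cdf_neg D eta K t =
     measure (D \<Otimes>\<^sub>M D) {w \<in> space (D \<Otimes>\<^sub>M D). \<not> same_label w \<and> eta2 eta K (fst (fst w)) (fst (snd w)) \<le> t}
     / measure (D \<Otimes>\<^sub>M D) {w \<in> space (D \<Otimes>\<^sub>M D). \<not> same_label w}"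

definition Qstar :: "('a \<times> nat) measure \<Rightarrow> (nat \<Rightarrow> 'a \<Rightarrow> real) \<Rightarrow> nat \<Rightarrow> real \<Rightarrow> real" where
  "Qstar D eta K \<alpha> = Inf {t. 1 - \<alpha> \<le> cdf_neg D eta K t}"

definition Sstar :: "(nat \<Rightarrow> 'a \<Rightarrow> real) \<Rightarrow> nat \<Rightarrow> real \<Rightarrow> 'a \<Rightarrow> 'a \<Rightarrow> real" where
  "Sstar eta K Q x x' = (if Q \<le> eta2 eta K x x' then 1 else 0)"

definition Rplus :: "('a \<times> nat) measure \<Rightarrow> ('a \<Rightarrow> 'a \<Rightarrow> real) \<Rightarrow> real" where
  "Rplus D S =
     (\<integral>w. (if same_label w then S (fst (fst w)) (fst (snd w)) else 0) \<partial>(D \<Otimes>\<^sub>M D))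
     / measure (D \<Otimes>\<^sub>M D) {w \<in> space (D \<Otimes>\<^sub>M D). same_label w}"

definition Rminus :: "('a \<times> nat) measure \<Rightarrow> ('a \<Rightarrow> 'a \<Rightarrow> real) \<Rightarrow> real" where
  "Rminus D S =
     (\<integral>w. (if same_label w then 0 else S (fst (fst w)) (fst (snd w))) \<partial>(D \<Otimes>\<^sub>M D))
     / measure (D \<Otimes>\<^sub>M D) {w \<in> space (D \<Otimes>\<^sub>M D). \<not> same_label w}"

definition QS :: "('a \<times> nat) measure \<Rightarrow> ('a \<Rightarrow> 'a \<Rightarrow> real) \<Rightarrow> ('a \<Rightarrow> 'a \<Rightarrow> real)
                  \<Rightarrow> ('a \<times> nat) \<Rightarrow> ('a \<times> nat) \<Rightarrow> real" where
  "QS D S S0 z z' =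
     (if snd z = snd z' then 1 else 0) * (S (fst z) (fst z') - S0 (fst z) (fst z'))
     - (\<integral>w. (if same_label w then 1 else 0) *
              (S (fst (fst w)) (fst (snd w)) - S0 (fst (fst w)) (fst (snd w))) \<partial>(D \<Otimes>\<^sub>M D))"

definition qS :: "('a \<times> nat) measure \<Rightarrow> ('a \<Rightarrow> 'a \<Rightarrow> real) \<Rightarrow> ('a \<Rightarrow> 'a \<Rightarrow> real)
                  \<Rightarrow> ('a \<times> nat) \<Rightarrow> real" where
  "qS D S S0 z' = (\<integral>z. QS D S S0 z z' \<partial>D)"

text \<open>|t|^(-a) as an extended nonnegative real, with |0|^(-a) = \<infinity> for a > 0 and
  |t|^0 = 1.\<close>
definition negpow :: "real \<Rightarrow> real \<Rightarrow> ennreal" where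
  "negpow a t = (if a = 0 then 1 else if t = 0 then \<infinity> else ennreal (\<bar>t\<bar> powr (- a)))"

text \<open>b^a for b \<ge> 0 with the convention 0^0 = 1 (Isabelle's powr has 0 powr 0 = 0).\<close>
definition pow0 :: "real \<Rightarrow> real \<Rightarrow> real" where
  "pow0 b a = (if a = 0 then 1 else b powr a)"

end

theory Submission
  imports Defs
begin

text \<open>Write \<open>F = S - S*\<close> and \<open>t = eta(X,X') - Q\<close>. Up to a constant, \<open>q_S(x',y')\<close> integrates
  \<open>I{Y = y'} F(X,x')\<close>, so \<open>Var q_S(X,Y) \<le> E[G(X')^2]\<close> with \<open>G(x') = E|F(X,x')|\<close>. Since
  \<open>S* = I{eta \<ge> Q}\<close> and \<open>0 \<le> S \<le> 1\<close>, \<open>|F| |t| = t (S* - S)\<close>, and integrating this identity over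
  pairs gives exactly the bracket on the right, because \<open>R+\<close> and \<open>R-\<close> are such integrals divided
  by \<open>P(Z = 1) = p\<close> and \<open>P(Z = -1) = 1 - p\<close>. For fixed \<open>x'\<close>, Cauchy--Schwarz with the weights
  \<open>|t|^(a/2)\<close> and \<open>|t|^(-a/2)\<close> and the noise condition give
  \<open>G(x')^2 \<le> c E[|F| |t|^a] \<le> c (E[|F| |t|])^a\<close>, the last step by \<open>|F| \<le> 1\<close> and Jensen's
  inequality for the concave map \<open>x^a\<close>; Jensen once more in \<open>x'\<close> finishes the proof.\<close>

section \<open>Integral inequalities\<close>

lemma integrable_mult_fst_snd:
  fixes f g :: "_ \<Rightarrow> real"
  assumes "sigma_finite_measure M2" and f: "integrable M1 f" and g: "integrable M2 g"
  shows "integrable (M1 \<Otimes>\<^sub>M M2) (\<lambda>w. f (fst w) * g (snd w))"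
proof -
  interpret M2: sigma_finite_measure M2 by fact
  have [measurable]: "f \<in> borel_measurable M1" "g \<in> borel_measurable M2" using f g by auto
  have "(\<integral>\<^sup>+w. ennreal (norm (f (fst w) * g (snd w))) \<partial>(M1 \<Otimes>\<^sub>M M2))
      = (\<integral>\<^sup>+x. \<integral>\<^sup>+y. ennreal (norm (f x) * norm (g y)) \<partial>M2 \<partial>M1)"
    by (subst M2.nn_integral_fst[symmetric]) (auto simp: abs_mult)
  also have "\<dots> = (\<integral>\<^sup>+x. ennreal (norm (f x)) \<partial>M1) * (\<integral>\<^sup>+y. ennreal (norm (g y)) \<partial>M2)"
    by (simp add: ennreal_mult nn_integral_cmult nn_integral_multc)
  also have "\<dots> < \<infinity>"
    using f g unfolding integrable_iff_bounded by (simp add: ennreal_mult_less_top)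
  finally show ?thesis unfolding integrable_iff_bounded by simp
qed

lemma powr_le_one_add: "0 \<le> (x::real) \<Longrightarrow> 0 < a \<Longrightarrow> a \<le> 1 \<Longrightarrow> x powr a \<le> 1 + x"
  by (cases "x \<le> 1") (auto intro: order.trans[OF powr_le1] order.trans[OF powr_mono[of a 1 x]])

lemma (in prob_space) integrable_powr:
  fixes g :: "'a \<Rightarrow> real"
  assumes g: "integrable M g" "\<forall>x\<in>space M. 0 \<le> g x" and a: "0 < a" "a \<le> 1"
  shows "integrable M (\<lambda>x. g x powr a)"
proof (rule Bochner_Integration.integrable_bound[where f="\<lambda>x. 1 + g x"])
  show "(\<lambda>x. g x powr a) \<in> borel_measurable M" using g by measurable
  show "AE x in M. norm (g x powr a) \<le> norm (1 + g x)"
    using g a by (auto intro!: powr_le_one_add)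
qed (use g in simp)

text \<open>Integrate the tangent line at the mean of the concave map \<open>x powr a\<close> (Young's inequality).\<close>
lemma (in prob_space) integral_powr_le_powr_integral:
  fixes g :: "'a \<Rightarrow> real"
  assumes g: "integrable M g" "\<forall>x\<in>space M. 0 \<le> g x" and a: "0 < a" "a \<le> 1"
  shows "(\<integral>x. g x powr a \<partial>M) \<le> (\<integral>x. g x \<partial>M) powr a"
proof -
  define m where "m = (\<integral>x. g x \<partial>M)"
  have "0 \<le> m" unfolding m_def using g by (auto intro!: integral_nonneg_AE)
  show ?thesis
  proof (cases "m = 0")
    case True
    then have "AE x in M. g x = 0"
      using integral_nonneg_eq_0_iff_AE[OF g(1)] g(2) unfolding m_def by auto
    then have "(\<integral>x. g x powr a \<partial>M) = 0" by (auto intro: integral_eq_zero_AE)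
    then show ?thesis by simp
  next
    case False
    with \<open>0 \<le> m\<close> have "0 < m" by simp
    have tangent: "g x powr a * m powr (1 - a) \<le> a * g x + (1 - a) * m" if "x \<in> space M" for x
      using Youngs_inequality_0[of a "1 - a" "g x" m] g(2) that a \<open>0 < m\<close>
      by (cases "g x = 0") auto
    have "(\<integral>x. g x powr a \<partial>M) * m powr (1 - a) = (\<integral>x. g x powr a * m powr (1 - a) \<partial>M)"
      by simp
    also have "\<dots> \<le> (\<integral>x. a * g x + (1 - a) * m \<partial>M)"
      using integrable_powr[OF g a] g tangent by (intro integral_mono) auto
    also have "\<dots> = m powr a * m powr (1 - a)"
      using g \<open>0 < m\<close> by (simp add: m_def prob_space algebra_simps flip: powr_add)
    finally show ?thesis using \<open>0 < m\<close> by (simp add: m_def)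
  qed
qed

lemma (in prob_space) integral_pow0_le_pow0_integral:
  fixes g :: "'a \<Rightarrow> real"
  assumes g: "integrable M g" "\<forall>x\<in>space M. 0 \<le> g x" and a: "0 \<le> a" "a \<le> 1"
  shows "integrable M (\<lambda>x. pow0 (g x) a)" "(\<integral>x. pow0 (g x) a \<partial>M) \<le> pow0 (\<integral>x. g x \<partial>M) a"
  using integrable_powr[OF g _ a(2)] integral_powr_le_powr_integral[OF g _ a(2)] a(1)
  by (cases "a = 0"; simp add: pow0_def prob_space)+

lemma measurable_negpow[measurable]:
  assumes [measurable]: "t \<in> borel_measurable M"
  shows "(\<lambda>x. negpow a (t x)) \<in> borel_measurable M"
  unfolding negpow_def by measurable

lemma negpow_pos: "0 < negpow a t"
  by (simp add: negpow_def)

lemma (in prob_space) pos_of_negpow_moment_le: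
  assumes [measurable]: "t \<in> borel_measurable M"
    and bound: "(\<integral>\<^sup>+x. negpow a (t x) \<partial>M) \<le> ennreal c"
  shows "0 < c"
proof -
  have "(\<integral>\<^sup>+x. negpow a (t x) \<partial>M) \<noteq> 0"
    using AE_False by (auto simp: nn_integral_0_iff_AE negpow_pos[THEN less_imp_neq, symmetric])
  then show ?thesis
    using bound by (metis ennreal_eq_0_iff leI le_zero_eq)
qed

text \<open>Cauchy--Schwarz for the factorisation \<open>s = (s |t|^(a/2)) |t|^(-a/2)\<close>; finiteness of the
  moment makes \<open>t \<noteq> 0\<close> almost everywhere.\<close>
lemma nn_integral_sq_le_negpow_moment:
  fixes s t :: "'a \<Rightarrow> real"
  assumes [measurable]: "s \<in> borel_measurable M" "t \<in> borel_measurable M"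
    and s: "\<forall>x\<in>space M. 0 \<le> s x" and a: "0 < a"
    and finite: "(\<integral>\<^sup>+x. negpow a (t x) \<partial>M) < \<infinity>"
  shows "(\<integral>\<^sup>+x. ennreal (s x) \<partial>M)\<^sup>2
    \<le> (\<integral>\<^sup>+x. ennreal ((s x)\<^sup>2 * \<bar>t x\<bar> powr a) \<partial>M) * (\<integral>\<^sup>+x. negpow a (t x) \<partial>M)"
proof -
  have "AE x in M. negpow a (t x) \<noteq> \<infinity>"
    using finite by (intro nn_integral_PInf_AE) auto
  then have "AE x in M. t x \<noteq> 0"
    by eventually_elim (use a in \<open>auto simp: negpow_def\<close>)
  then have "(\<integral>\<^sup>+x. ennreal (s x) \<partial>M)
      = (\<integral>\<^sup>+x. ennreal (s x * \<bar>t x\<bar> powr (a / 2)) * negpow (a / 2) (t x) \<partial>M)"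
  proof (intro nn_integral_cong_AE, eventually_elim)
    fix x assume "t x \<noteq> 0"
    then show "ennreal (s x) = ennreal (s x * \<bar>t x\<bar> powr (a / 2)) * negpow (a / 2) (t x)"
      using a by (simp add: negpow_def mult.assoc flip: ennreal_mult'' powr_add)
  qed
  also have "\<dots>\<^sup>2 \<le> (\<integral>\<^sup>+x. ennreal (s x * \<bar>t x\<bar> powr (a / 2)) ^ 2 \<partial>M)
                   * (\<integral>\<^sup>+x. negpow (a / 2) (t x) ^ 2 \<partial>M)"
    by (rule Cauchy_Schwarz_nn_integral) measurable
  also have "(\<integral>\<^sup>+x. ennreal (s x * \<bar>t x\<bar> powr (a / 2)) ^ 2 \<partial>M)
      = (\<integral>\<^sup>+x. ennreal ((s x)\<^sup>2 * \<bar>t x\<bar> powr a) \<partial>M)"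
  proof (intro nn_integral_cong)
    fix x assume "x \<in> space M"
    have "(s x * \<bar>t x\<bar> powr (a / 2))\<^sup>2 = (s x)\<^sup>2 * \<bar>t x\<bar> powr a"
      using a by (cases "t x = 0") (simp_all add: power_mult_distrib powr_power)
    then show "ennreal (s x * \<bar>t x\<bar> powr (a / 2)) ^ 2 = ennreal ((s x)\<^sup>2 * \<bar>t x\<bar> powr a)"
      using s \<open>x \<in> space M\<close> by (simp add: ennreal_power)
  qed
  also have "(\<lambda>x. negpow (a / 2) (t x) ^ 2) = (\<lambda>x. negpow a (t x))"
    using a by (intro ext) (simp add: negpow_def ennreal_power powr_power)
  finally show ?thesis .
qed

lemma (in prob_space) sq_integral_le_negpow_moment:
  fixes s t :: "'a \<Rightarrow> real"
  assumes [measurable]: "s \<in> borel_measurable M" "t \<in> borel_measurable M"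
    and s: "\<forall>x\<in>space M. 0 \<le> s x \<and> s x \<le> 1" and a: "0 < a"
    and int_u: "integrable M (\<lambda>x. s x * \<bar>t x\<bar> powr a)"
    and noise: "(\<integral>\<^sup>+x. negpow a (t x) \<partial>M) \<le> ennreal c"
  shows "(\<integral>x. s x \<partial>M)\<^sup>2 \<le> c * (\<integral>x. s x * \<bar>t x\<bar> powr a \<partial>M)"
proof -
  have "0 < c"
    using pos_of_negpow_moment_le[OF _ noise] by simp
  have "integrable M s"
    using s by (intro integrable_const_bound[where B=1]) auto
  then have "(\<integral>\<^sup>+x. ennreal (s x) \<partial>M) = ennreal (\<integral>x. s x \<partial>M)"
    using s by (intro nn_integral_eq_integral) auto
  then have "ennreal ((\<integral>x. s x \<partial>M)\<^sup>2) = (\<integral>\<^sup>+x. ennreal (s x) \<partial>M)\<^sup>2"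
    using s by (simp add: ennreal_power integral_nonneg)
  also have "\<dots> \<le> (\<integral>\<^sup>+x. ennreal ((s x)\<^sup>2 * \<bar>t x\<bar> powr a) \<partial>M) * (\<integral>\<^sup>+x. negpow a (t x) \<partial>M)"
    using s a order.strict_trans1[OF noise ennreal_less_top]
    by (intro nn_integral_sq_le_negpow_moment) auto
  also have "\<dots> \<le> (\<integral>\<^sup>+x. ennreal (s x * \<bar>t x\<bar> powr a) \<partial>M) * ennreal c"
  proof (rule mult_mono)
    show "(\<integral>\<^sup>+x. ennreal ((s x)\<^sup>2 * \<bar>t x\<bar> powr a) \<partial>M) \<le> (\<integral>\<^sup>+x. ennreal (s x * \<bar>t x\<bar> powr a) \<partial>M)"
    proof (rule nn_integral_mono)
      fix x assume "x \<in> space M"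
      then have "(s x)\<^sup>2 \<le> s x"
        using s by (simp add: power2_eq_square mult_left_le_one_le)
      then show "ennreal ((s x)\<^sup>2 * \<bar>t x\<bar> powr a) \<le> ennreal (s x * \<bar>t x\<bar> powr a)"
        by (intro ennreal_leI mult_right_mono) auto
    qed
  qed (use noise in auto)
  also have "(\<integral>\<^sup>+x. ennreal (s x * \<bar>t x\<bar> powr a) \<partial>M) = ennreal (\<integral>x. s x * \<bar>t x\<bar> powr a \<partial>M)"
    using s int_u by (intro nn_integral_eq_integral) auto
  also have "\<dots> * ennreal c = ennreal (c * (\<integral>x. s x * \<bar>t x\<bar> powr a \<partial>M))"
    using \<open>0 < c\<close> by (simp add: mult.commute flip: ennreal_mult')
  finally show ?thesis
    using s \<open>0 < c\<close> by (simp add: integral_nonneg)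
qed

lemma (in prob_space) sq_integral_le_powr_integral:
  fixes s t :: "'a \<Rightarrow> real"
  assumes [measurable]: "s \<in> borel_measurable M" and t: "integrable M t"
    and s: "\<forall>x\<in>space M. 0 \<le> s x \<and> s x \<le> 1" and a: "0 < a" "a \<le> 1"
    and noise: "(\<integral>\<^sup>+x. negpow a (t x) \<partial>M) \<le> ennreal c"
  shows "(\<integral>x. s x \<partial>M)\<^sup>2 \<le> c * (\<integral>x. s x * \<bar>t x\<bar> \<partial>M) powr a"
proof -
  have [measurable]: "t \<in> borel_measurable M"
    using t by auto
  have int_st: "integrable M (\<lambda>x. s x * \<bar>t x\<bar>)"
  proof (rule Bochner_Integration.integrable_bound[where f="\<lambda>x. \<bar>t x\<bar>"])
    show "AE x in M. norm (s x * \<bar>t x\<bar>) \<le> norm \<bar>t x\<bar>"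
      using s by (intro AE_I2) (simp add: abs_mult mult_left_le_one_le)
  qed (use t in auto)
  have le_powr: "s x * \<bar>t x\<bar> powr a \<le> (s x * \<bar>t x\<bar>) powr a" if "x \<in> space M" for x
  proof -
    have "s x powr 1 \<le> s x powr a"
      using s a that by (intro powr_mono') auto
    then show ?thesis
      using s that by (simp add: powr_mult mult_right_mono)
  qed
  have int_powr: "integrable M (\<lambda>x. (s x * \<bar>t x\<bar>) powr a)"
    using s a by (intro integrable_powr int_st) auto
  have int_u: "integrable M (\<lambda>x. s x * \<bar>t x\<bar> powr a)"
    using s le_powr by (intro Bochner_Integration.integrable_bound[OF int_powr] AE_I2) auto
  have "(\<integral>x. s x \<partial>M)\<^sup>2 \<le> c * (\<integral>x. s x * \<bar>t x\<bar> powr a \<partial>M)"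
    using s a int_u noise by (intro sq_integral_le_negpow_moment) auto
  also have "\<dots> \<le> c * (\<integral>x. (s x * \<bar>t x\<bar>) powr a \<partial>M)"
    using pos_of_negpow_moment_le[OF _ noise] int_u int_powr le_powr
    by (intro mult_left_mono integral_mono) auto
  also have "\<dots> \<le> c * (\<integral>x. s x * \<bar>t x\<bar> \<partial>M) powr a"
    using pos_of_negpow_moment_le[OF _ noise] s a int_st
    by (intro mult_left_mono integral_powr_le_powr_integral) auto
  finally show ?thesis .
qed

lemma (in prob_space) sq_integral_le_pow0_integral:
  fixes s t :: "'a \<Rightarrow> real"
  assumes [measurable]: "s \<in> borel_measurable M" and t: "integrable M t"
    and s: "\<forall>x\<in>space M. 0 \<le> s x \<and> s x \<le> 1" and a: "0 \<le> a" "a \<le> 1"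
    and noise: "(\<integral>\<^sup>+x. negpow a (t x) \<partial>M) \<le> ennreal c"
  shows "(\<integral>x. s x \<partial>M)\<^sup>2 \<le> c * pow0 (\<integral>x. s x * \<bar>t x\<bar> \<partial>M) a"
proof (cases "a = 0")
  case True
  then have "1 \<le> c"
    using noise by (simp add: negpow_def emeasure_space_1)
  moreover have "(\<integral>x. s x \<partial>M)\<^sup>2 \<le> 1"
  proof (rule power_le_one)
    have "integrable M s"
      using s by (intro integrable_const_bound[where B=1]) auto
    then show "(\<integral>x. s x \<partial>M) \<le> 1"
      using integral_mono[of M s "\<lambda>_. 1"] s by (simp add: prob_space)
  qed (use s in \<open>simp add: integral_nonneg\<close>)
  ultimately show ?thesis using True by (simp add: pow0_def)
next
  case False
  then show ?thesis
    using sq_integral_le_powr_integral[OF _ t s _ a(2) noise] a by (simp add: pow0_def)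
qed

lemma (in prob_space) variance_le_of_abs_diff_le:
  fixes f g :: "'a \<Rightarrow> real"
  assumes [measurable]: "f \<in> borel_measurable M" and g: "integrable M (\<lambda>x. (g x)\<^sup>2)"
    and bound: "\<forall>x\<in>space M. \<bar>f x - C\<bar> \<le> g x"
  shows "variance f \<le> expectation (\<lambda>x. (g x)\<^sup>2)"
proof -
  define h where "h x = f x - C" for x
  have [measurable]: "h \<in> borel_measurable M"
    unfolding h_def by measurable
  have h_sq_le: "(h x)\<^sup>2 \<le> (g x)\<^sup>2" if "x \<in> space M" for x
  proof -
    have "\<bar>h x\<bar> \<le> g x" using bound that by (simp add: h_def)
    from power_mono[OF this abs_ge_zero, of 2] show ?thesis by simp
  qed
  have int_h2: "integrable M (\<lambda>x. (h x)\<^sup>2)"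
  proof (rule Bochner_Integration.integrable_bound[OF g])
    show "AE x in M. norm ((h x)\<^sup>2) \<le> norm ((g x)\<^sup>2)"
      using h_sq_le by (intro AE_I2) simp
  qed measurable
  have int_h: "integrable M h"
    by (rule square_integrable_imp_integrable) (measurable, fact int_h2)
  have f_eq: "f = (\<lambda>x. h x + C)"
    by (simp add: h_def)
  have "expectation (\<lambda>x. h x + C) = expectation h + C"
    using int_h by (simp add: prob_space)
  then have "variance f = variance h"
    unfolding f_eq by simp
  also have "\<dots> = expectation (\<lambda>x. (h x)\<^sup>2) - (expectation h)\<^sup>2"
    by (rule variance_eq[OF int_h int_h2])
  also have "\<dots> \<le> expectation (\<lambda>x. (g x)\<^sup>2)"
    using integral_mono[OF int_h2 g h_sq_le] zero_le_power2[of "expectation h"] by linarith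
  finally show ?thesis .
qed

section \<open>Bounded kernels on pairs\<close>

definition bounded_kernel :: "'a measure \<Rightarrow> ('a \<Rightarrow> 'a \<Rightarrow> real) \<Rightarrow> bool" where
  "bounded_kernel M h \<longleftrightarrow> (\<lambda>w. h (fst w) (snd w)) \<in> borel_measurable (M \<Otimes>\<^sub>M M)
     \<and> (\<exists>B. \<forall>x\<in>space M. \<forall>y\<in>space M. \<bar>h x y\<bar> \<le> B)"

lemma bounded_kernel_measurable:
  "bounded_kernel M h \<Longrightarrow> (\<lambda>w. h (fst w) (snd w)) \<in> borel_measurable (M \<Otimes>\<^sub>M M)"
  by (simp add: bounded_kernel_def)

lemma bounded_kernel_bound:
  "bounded_kernel M h \<Longrightarrow> \<exists>B\<ge>0. \<forall>x\<in>space M. \<forall>y\<in>space M. \<bar>h x y\<bar> \<le> B"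
  unfolding bounded_kernel_def by (meson abs_ge_zero order.trans abs_ge_self)

lemma bounded_kernel_unit_interval:
  assumes "case_prod h \<in> borel_measurable (M \<Otimes>\<^sub>M M)"
    and "\<forall>x\<in>space M. \<forall>y\<in>space M. 0 \<le> h x y \<and> h x y \<le> 1"
  shows "bounded_kernel M h"
  using assms unfolding bounded_kernel_def by (auto simp: case_prod_beta' intro!: exI[of _ 1])

lemma bounded_kernel_diff:
  assumes f: "bounded_kernel M f" and g: "bounded_kernel M g"
  shows "bounded_kernel M (\<lambda>x y. f x y - g x y)"
proof -
  note [measurable] = bounded_kernel_measurable[OF f] bounded_kernel_measurable[OF g]
  obtain Bf where Bf: "\<forall>x\<in>space M. \<forall>y\<in>space M. \<bar>f x y\<bar> \<le> Bf"
    using bounded_kernel_bound[OF f] by blast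
  obtain Bg where Bg: "\<forall>x\<in>space M. \<forall>y\<in>space M. \<bar>g x y\<bar> \<le> Bg"
    using bounded_kernel_bound[OF g] by blast
  have "\<forall>x\<in>space M. \<forall>y\<in>space M. \<bar>f x y - g x y\<bar> \<le> Bf + Bg"
    using Bf Bg by (auto intro!: order.trans[OF abs_triangle_ineq4] add_mono)
  then show ?thesis
    unfolding bounded_kernel_def by (intro conjI exI[of _ "Bf + Bg"]) measurable
qed

lemma measurable_kernel_slice:
  assumes "(\<lambda>w. h (fst w) (snd w)) \<in> borel_measurable (M \<Otimes>\<^sub>M M)" and "y \<in> space M"
  shows "(\<lambda>x. h x y) \<in> borel_measurable M"
  using measurable_compose[OF measurable_Pair2'[OF \<open>y \<in> space M\<close>] assms(1)] by simp

lemma eta2_commute: "eta2 eta K x y = eta2 eta K y x"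
  by (simp add: eta2_def mult.commute)

lemma abs_diff_Sstar_mult:
  fixes s e Q :: real
  assumes "0 \<le> s" "s \<le> 1"
  shows "\<bar>s - (if Q \<le> e then 1 else 0)\<bar> * \<bar>e - Q\<bar> = (e - Q) * ((if Q \<le> e then 1 else 0) - s)"
  using assms by (cases "Q \<le> e") (simp_all add: algebra_simps)

section \<open>Pairs of labelled observations\<close>

locale classification_model =
  fixes MX :: "'a measure" and D :: "('a \<times> nat) measure" and K :: nat
    and eta :: "nat \<Rightarrow> 'a \<Rightarrow> real"
  assumes prob_space_D: "prob_space D"
    and sets_D: "sets D = sets (MX \<Otimes>\<^sub>M count_space {1..K})"
    and eta_cond: "cond_prob_version MX D K eta"
begin

definition \<mu> :: "'a measure" where
  "\<mu> = distr D MX fst"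

lemma space_D: "space D = space MX \<times> {1..K}"
  using sets_eq_imp_space_eq[OF sets_D] by (simp add: space_pair_measure)

lemma measurable_fst_D[measurable]: "fst \<in> measurable D MX"
  by (subst measurable_cong_sets[OF sets_D refl]) simp

lemma measurable_label[measurable]: "(\<lambda>z. real (snd z)) \<in> borel_measurable D"
proof -
  have "snd \<in> measurable D (count_space {1..K})"
    by (subst measurable_cong_sets[OF sets_D refl]) simp
  from measurable_compose[OF this, of real borel] show ?thesis by (simp add: comp_def)
qed

lemma pred_same_label[measurable]: "Measurable.pred (D \<Otimes>\<^sub>M D) same_label"
proof -
  have same_label_eq: "same_label = (\<lambda>w. real (snd (fst w)) = real (snd (snd w)))"
    by (simp add: same_label_def fun_eq_iff)
  show ?thesis
    unfolding same_label_eq by measurable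
qed

lemma label_event_in_sets[measurable]: "k \<in> {1..K} \<Longrightarrow> space MX \<times> {k} \<in> sets D"
  using sets_D by simp

lemma measurable_kernel_D:
  assumes "(\<lambda>w. h (fst w) (snd w)) \<in> borel_measurable (MX \<Otimes>\<^sub>M MX)"
  shows "(\<lambda>w. h (fst (fst w)) (fst (snd w))) \<in> borel_measurable (D \<Otimes>\<^sub>M D)"
proof -
  have "(\<lambda>w. (fst (fst w), fst (snd w))) \<in> measurable (D \<Otimes>\<^sub>M D) (MX \<Otimes>\<^sub>M MX)"
    by measurable
  from measurable_compose[OF this assms] show ?thesis by (simp add: comp_def)
qed

lemma prob_space_pair_D: "prob_space (D \<Otimes>\<^sub>M D)"
  using prob_space_D by (simp add: prob_space_pair)

lemma prob_space_\<mu>: "prob_space \<mu>"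
  unfolding \<mu>_def by (intro prob_space.prob_space_distr prob_space_D measurable_fst_D)

lemma sets_\<mu>[simp, measurable_cong]: "sets \<mu> = sets MX"
  by (simp add: \<mu>_def)

lemma space_\<mu>[simp]: "space \<mu> = space MX"
  by (simp add: \<mu>_def)

lemma sets_pair_\<mu>[measurable_cong]: "sets (\<mu> \<Otimes>\<^sub>M \<mu>) = sets (MX \<Otimes>\<^sub>M MX)"
  by (rule sets_pair_measure_cong) simp_all

lemma measurable_eta[measurable]: "k \<in> {1..K} \<Longrightarrow> eta k \<in> borel_measurable MX"
  using eta_cond by (simp add: cond_prob_version_def)

lemma integrable_eta: "k \<in> {1..K} \<Longrightarrow> integrable \<mu> (eta k)"
  using eta_cond by (simp add: cond_prob_version_def \<mu>_def)

lemma measure_label_event: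
  "k \<in> {1..K} \<Longrightarrow> A \<in> sets MX \<Longrightarrow> measure D (A \<times> {k}) = (\<integral>x. indicator A x * eta k x \<partial>\<mu>)"
  using eta_cond by (simp add: cond_prob_version_def \<mu>_def set_lebesgue_integral_def)

lemma AE_eta_nonneg:
  assumes k: "k \<in> {1..K}"
  shows "AE x in \<mu>. 0 \<le> eta k x"
proof -
  define A where "A = {x \<in> space MX. eta k x < 0}"
  have A[measurable]: "A \<in> sets MX" unfolding A_def using k by measurable
  have "A \<in> sets \<mu>" by simp
  from integrable_real_mult_indicator[OF this integrable_eta[OF k]]
  have int: "integrable \<mu> (\<lambda>x. - (indicator A x * eta k x))" by (simp add: mult.commute)
  have "0 \<le> (\<integral>x. indicator A x * eta k x \<partial>\<mu>)"
    using measure_label_event[OF k A] by (metis measure_nonneg)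
  moreover have "0 \<le> (\<integral>x. - (indicator A x * eta k x) \<partial>\<mu>)"
    by (rule integral_nonneg_AE) (auto simp: A_def indicator_def)
  ultimately have "(\<integral>x. - (indicator A x * eta k x) \<partial>\<mu>) = 0"
    by simp
  moreover have "AE x in \<mu>. 0 \<le> - (indicator A x * eta k x)"
    by (rule AE_I2) (auto simp: A_def indicator_def)
  ultimately have "AE x in \<mu>. indicator A x * eta k x = 0"
    using integral_nonneg_eq_0_iff_AE[OF int] by simp
  then show ?thesis
    using AE_space by eventually_elim (auto simp: A_def indicator_def split: if_splits)
qed

definition label_slice :: "nat \<Rightarrow> ('a \<times> nat) measure" where
  "label_slice k = density D (indicator (space MX \<times> {k}))"

lemma sets_label_slice[measurable_cong]: "sets (label_slice k) = sets D"
  by (simp add: label_slice_def)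

lemma finite_measure_label_slice: "k \<in> {1..K} \<Longrightarrow> finite_measure (label_slice k)"
proof -
  assume "k \<in> {1..K}"
  interpret D: prob_space D by (rule prob_space_D)
  show ?thesis
    unfolding label_slice_def using \<open>k \<in> {1..K}\<close> by (intro finite_measureI) (simp add: emeasure_density)
qed

lemma distr_label_slice:
  assumes k: "k \<in> {1..K}"
  shows "distr (label_slice k) MX fst = density \<mu> (\<lambda>x. ennreal (eta k x))"
proof (rule measure_eqI)
  fix A assume "A \<in> sets (distr (label_slice k) MX fst)"
  then have A[measurable]: "A \<in> sets MX" by simp
  interpret D: prob_space D by (rule prob_space_D)
  have "emeasure (distr (label_slice k) MX fst) A = emeasure (label_slice k) (fst -` A \<inter> space D)"
    by (subst emeasure_distr) (auto simp: label_slice_def)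
  also have "\<dots> = (\<integral>\<^sup>+z. indicator (space MX \<times> {k}) z * indicator (fst -` A \<inter> space D) z \<partial>D)"
    unfolding label_slice_def using k by (subst emeasure_density) auto
  also have "\<dots> = (\<integral>\<^sup>+z. indicator (A \<times> {k}) z \<partial>D)"
    using sets.sets_into_space[OF A] by (intro nn_integral_cong) (auto simp: space_D indicator_def)
  also have "\<dots> = ennreal (\<integral>x. indicator A x * eta k x \<partial>\<mu>)"
    using k sets_D by (simp add: D.emeasure_eq_measure measure_label_event)
  also have "\<dots> = (\<integral>\<^sup>+x. ennreal (eta k x) * indicator A x \<partial>\<mu>)"
  proof -
    have "(\<integral>\<^sup>+x. ennreal (indicator A x * eta k x) \<partial>\<mu>) = ennreal (\<integral>x. indicator A x * eta k x \<partial>\<mu>)"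
      using integrable_real_mult_indicator[OF _ integrable_eta[OF k], of A] AE_eta_nonneg[OF k]
      by (intro nn_integral_eq_integral) (auto simp: mult.commute indicator_def)
    then show ?thesis
      by (simp add: indicator_mult_ennreal mult.commute)
  qed
  also have "\<dots> = emeasure (density \<mu> (\<lambda>x. ennreal (eta k x))) A"
    using k by (simp add: emeasure_density)
  finally show "emeasure (distr (label_slice k) MX fst) A = emeasure (density \<mu> (\<lambda>x. ennreal (eta k x))) A" .
qed (simp add: \<mu>_def)

lemma AE_eta_nonneg_pair:
  assumes k: "k \<in> {1..K}"
  shows "AE w in \<mu> \<Otimes>\<^sub>M \<mu>. 0 \<le> eta k (fst w) \<and> 0 \<le> eta k (snd w)"
proof -
  interpret \<mu>: prob_space \<mu> by (rule prob_space_\<mu>)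
  interpret pair_sigma_finite \<mu> \<mu> ..
  have [measurable]: "eta k \<in> borel_measurable MX"
    using k by simp
  show ?thesis
  proof (rule AE_pair_measure)
    show "AE x in \<mu>. AE y in \<mu>. 0 \<le> eta k (fst (x, y)) \<and> 0 \<le> eta k (snd (x, y))"
      using AE_eta_nonneg[OF k] by eventually_elim (use AE_eta_nonneg[OF k] in auto)
  qed measurable
qed

lemma distr_label_slice_pair:
  assumes k: "k \<in> {1..K}"
  shows "distr (label_slice k \<Otimes>\<^sub>M label_slice k) (MX \<Otimes>\<^sub>M MX) (\<lambda>(z, z'). (fst z, fst z'))
    = density (\<mu> \<Otimes>\<^sub>M \<mu>) (\<lambda>w. ennreal (eta k (fst w) * eta k (snd w)))"
proof -
  interpret \<mu>: prob_space \<mu> by (rule prob_space_\<mu>)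
  interpret N: finite_measure "label_slice k" by (rule finite_measure_label_slice[OF k])
  interpret \<nu>: finite_measure "density \<mu> (\<lambda>x. ennreal (eta k x))"
    unfolding distr_label_slice[OF k, symmetric] by (rule N.finite_measure_distr) simp
  have [measurable]: "eta k \<in> borel_measurable MX"
    using k by simp
  have "distr (label_slice k \<Otimes>\<^sub>M label_slice k) (MX \<Otimes>\<^sub>M MX) (\<lambda>(z, z'). (fst z, fst z'))
      = distr (label_slice k) MX fst \<Otimes>\<^sub>M distr (label_slice k) MX fst"
    by (rule pair_measure_distr[symmetric])
       (simp_all add: distr_label_slice[OF k] \<nu>.sigma_finite_measure)
  also have "\<dots> = density (\<mu> \<Otimes>\<^sub>M \<mu>) (\<lambda>(x, y). ennreal (eta k x) * ennreal (eta k y))"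
    unfolding distr_label_slice[OF k]
    by (intro pair_measure_density) (auto intro: \<nu>.sigma_finite_measure \<mu>.sigma_finite_measure)
  also have "\<dots> = density (\<mu> \<Otimes>\<^sub>M \<mu>) (\<lambda>w. ennreal (eta k (fst w) * eta k (snd w)))"
    using AE_eta_nonneg_pair[OF k] by (intro density_cong) (auto simp: ennreal_mult)
  finally show ?thesis .
qed

lemma integral_label_slice_pair:
  fixes h :: "'a \<Rightarrow> 'a \<Rightarrow> real"
  assumes k: "k \<in> {1..K}"
    and h[measurable]: "(\<lambda>w. h (fst w) (snd w)) \<in> borel_measurable (MX \<Otimes>\<^sub>M MX)"
  defines "R \<equiv> space MX \<times> {k}"
  shows "(\<integral>w. indicator R (fst w) * indicator R (snd w) * h (fst (fst w)) (fst (snd w)) \<partial>(D \<Otimes>\<^sub>M D))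
       = (\<integral>w. eta k (fst w) * eta k (snd w) * h (fst w) (snd w) \<partial>(\<mu> \<Otimes>\<^sub>M \<mu>))"
proof -
  interpret D: prob_space D by (rule prob_space_D)
  interpret N: finite_measure "label_slice k" by (rule finite_measure_label_slice[OF k])
  have R[measurable]: "R \<in> sets D"
    unfolding R_def using k by measurable
  have "label_slice k \<Otimes>\<^sub>M label_slice k = density (D \<Otimes>\<^sub>M D) (\<lambda>(x, y). indicator R x * indicator R y)"
    unfolding label_slice_def R_def[symmetric]
    by (rule pair_measure_density) (auto intro: N.sigma_finite_measure[unfolded label_slice_def R_def[symmetric]]
        D.sigma_finite_measure)
  also have "\<dots> = density (D \<Otimes>\<^sub>M D) (\<lambda>w. ennreal (indicator R (fst w) * indicator R (snd w)))"
    by (intro density_cong) (auto simp: indicator_def)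
  finally have "(\<integral>w. indicator R (fst w) * indicator R (snd w) * h (fst (fst w)) (fst (snd w)) \<partial>(D \<Otimes>\<^sub>M D))
      = (\<integral>w. h (fst (fst w)) (fst (snd w)) \<partial>(label_slice k \<Otimes>\<^sub>M label_slice k))"
    by (simp add: integral_density measurable_kernel_D[OF h])
  also have "\<dots> = (\<integral>w. h (fst w) (snd w) \<partial>distr (label_slice k \<Otimes>\<^sub>M label_slice k) (MX \<Otimes>\<^sub>M MX)
      (\<lambda>(z, z'). (fst z, fst z')))"
    by (subst integral_distr) (auto simp: case_prod_beta')
  also have "\<dots> = (\<integral>w. eta k (fst w) * eta k (snd w) * h (fst w) (snd w) \<partial>(\<mu> \<Otimes>\<^sub>M \<mu>))"
    unfolding distr_label_slice_pair[OF k] using k AE_eta_nonneg_pair[OF k]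
    by (subst integral_density) auto
  finally show ?thesis .
qed

lemma integrable_kernel:
  "bounded_kernel MX h \<Longrightarrow> integrable (\<mu> \<Otimes>\<^sub>M \<mu>) (\<lambda>w. h (fst w) (snd w))"
proof -
  assume h: "bounded_kernel MX h"
  interpret \<mu>: prob_space \<mu> by (rule prob_space_\<mu>)
  interpret \<mu>\<mu>: pair_prob_space \<mu> \<mu> ..
  obtain B where "\<forall>x\<in>space MX. \<forall>y\<in>space MX. \<bar>h x y\<bar> \<le> B"
    using bounded_kernel_bound[OF h] by blast
  with bounded_kernel_measurable[OF h] show ?thesis
    by (intro \<mu>\<mu>.P.integrable_const_bound[where B=B] AE_I2) (auto simp: space_pair_measure)
qed

lemma integrable_kernel_D:
  "bounded_kernel MX h \<Longrightarrow> integrable (D \<Otimes>\<^sub>M D) (\<lambda>w. h (fst (fst w)) (fst (snd w)))"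
proof -
  assume h: "bounded_kernel MX h"
  interpret DD: prob_space "D \<Otimes>\<^sub>M D" by (rule prob_space_pair_D)
  obtain B where "\<forall>x\<in>space MX. \<forall>y\<in>space MX. \<bar>h x y\<bar> \<le> B"
    using bounded_kernel_bound[OF h] by blast
  with measurable_kernel_D[OF bounded_kernel_measurable[OF h]] show ?thesis
    by (intro DD.integrable_const_bound[where B=B] AE_I2) (auto simp: space_pair_measure space_D)
qed

lemma integrable_eta_mult_eta:
  "k \<in> {1..K} \<Longrightarrow> integrable (\<mu> \<Otimes>\<^sub>M \<mu>) (\<lambda>w. eta k (fst w) * eta k (snd w))"
  using integrable_mult_fst_snd[OF _ integrable_eta integrable_eta] prob_space_\<mu>
  by (simp add: prob_space_imp_sigma_finite)

lemma integrable_eta_mult_kernel: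
  assumes k: "k \<in> {1..K}" and h: "bounded_kernel MX h"
  shows "integrable (\<mu> \<Otimes>\<^sub>M \<mu>) (\<lambda>w. eta k (fst w) * eta k (snd w) * h (fst w) (snd w))"
proof -
  obtain B where B: "\<forall>x\<in>space MX. \<forall>y\<in>space MX. \<bar>h x y\<bar> \<le> B"
    using bounded_kernel_bound[OF h] by blast
  have [measurable]: "eta k \<in> borel_measurable MX" "(\<lambda>w. h (fst w) (snd w)) \<in> borel_measurable (MX \<Otimes>\<^sub>M MX)"
    using k bounded_kernel_measurable[OF h] by simp_all
  show ?thesis
  proof (rule Bochner_Integration.integrable_bound[OF integrable_mult_right[OF integrable_eta_mult_eta[OF k], of B]])
    show "AE w in \<mu> \<Otimes>\<^sub>M \<mu>. norm (eta k (fst w) * eta k (snd w) * h (fst w) (snd w))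
        \<le> norm (B * (eta k (fst w) * eta k (snd w)))"
    proof (rule AE_I2)
      fix w assume "w \<in> space (\<mu> \<Otimes>\<^sub>M \<mu>)"
      then have "\<bar>h (fst w) (snd w)\<bar> \<le> \<bar>B\<bar>"
        using B by (fastforce simp: space_pair_measure)
      then have "\<bar>h (fst w) (snd w)\<bar> * (\<bar>eta k (fst w)\<bar> * \<bar>eta k (snd w)\<bar>)
          \<le> \<bar>B\<bar> * (\<bar>eta k (fst w)\<bar> * \<bar>eta k (snd w)\<bar>)"
        by (intro mult_right_mono) auto
      then show "norm (eta k (fst w) * eta k (snd w) * h (fst w) (snd w))
          \<le> norm (B * (eta k (fst w) * eta k (snd w)))"
        by (simp add: abs_mult mult_ac)
    qed
  qed measurable
qed

lemma same_label_indicator_sum: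
  assumes "w \<in> space (D \<Otimes>\<^sub>M D)"
  shows "(if same_label w then 1 else 0)
    = (\<Sum>k\<in>{1..K}. indicator (space MX \<times> {k}) (fst w) * indicator (space MX \<times> {k}) (snd w) :: real)"
proof -
  obtain x y x' y' where w: "w = ((x, y), (x', y'))" "x \<in> space MX" "x' \<in> space MX"
    "y \<in> {1..K}" "y' \<in> {1..K}"
    using assms by (auto simp: space_pair_measure space_D)
  have "(\<Sum>k\<in>{1..K}. indicator (space MX \<times> {k}) (fst w) * indicator (space MX \<times> {k}) (snd w) :: real)
      = (\<Sum>k\<in>{1..K}. if k = y then (if y = y' then 1 else 0) else 0)"
    by (intro sum.cong refl) (auto simp: w indicator_def)
  then show ?thesis
    using w by (simp add: same_label_def)
qed

lemma integral_same_label: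
  assumes h: "bounded_kernel MX h"
  shows "(\<integral>w. (if same_label w then h (fst (fst w)) (fst (snd w)) else 0) \<partial>(D \<Otimes>\<^sub>M D))
       = (\<integral>w. eta2 eta K (fst w) (snd w) * h (fst w) (snd w) \<partial>(\<mu> \<Otimes>\<^sub>M \<mu>))"
proof -
  define I where "I k w = indicator (space MX \<times> {k}) (fst w) * indicator (space MX \<times> {k}) (snd w)
    * h (fst (fst w)) (fst (snd w))" for k and w :: "('a \<times> nat) \<times> ('a \<times> nat)"
  have [measurable]: "(\<lambda>w. h (fst (fst w)) (fst (snd w))) \<in> borel_measurable (D \<Otimes>\<^sub>M D)"
    by (rule measurable_kernel_D[OF bounded_kernel_measurable[OF h]])
  have "(\<integral>w. (if same_label w then h (fst (fst w)) (fst (snd w)) else 0) \<partial>(D \<Otimes>\<^sub>M D))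
      = (\<integral>w. (\<Sum>k\<in>{1..K}. I k w) \<partial>(D \<Otimes>\<^sub>M D))"
  proof (rule Bochner_Integration.integral_cong[OF refl])
    fix w assume w: "w \<in> space (D \<Otimes>\<^sub>M D)"
    have "(\<Sum>k\<in>{1..K}. I k w) = (\<Sum>k\<in>{1..K}. indicator (space MX \<times> {k}) (fst w)
        * indicator (space MX \<times> {k}) (snd w)) * h (fst (fst w)) (fst (snd w))"
      unfolding I_def by (rule sum_distrib_right[symmetric])
    also have "\<dots> = (if same_label w then h (fst (fst w)) (fst (snd w)) else 0)"
      unfolding same_label_indicator_sum[OF w, symmetric] by simp
    finally show "(if same_label w then h (fst (fst w)) (fst (snd w)) else 0) = (\<Sum>k\<in>{1..K}. I k w)" ..
  qed
  also have "\<dots> = (\<Sum>k\<in>{1..K}. \<integral>w. I k w \<partial>(D \<Otimes>\<^sub>M D))"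
  proof (rule Bochner_Integration.integral_sum)
    fix k assume "k \<in> {1..K}"
    note [measurable] = label_event_in_sets[OF this]
    show "integrable (D \<Otimes>\<^sub>M D) (I k)"
      unfolding I_def by (rule Bochner_Integration.integrable_bound[OF integrable_kernel_D[OF h]])
        (auto simp: indicator_def)
  qed
  also have "\<dots> = (\<Sum>k\<in>{1..K}. \<integral>w. eta k (fst w) * eta k (snd w) * h (fst w) (snd w) \<partial>(\<mu> \<Otimes>\<^sub>M \<mu>))"
    unfolding I_def by (intro sum.cong refl integral_label_slice_pair bounded_kernel_measurable[OF h])
  also have "\<dots> = (\<integral>w. eta2 eta K (fst w) (snd w) * h (fst w) (snd w) \<partial>(\<mu> \<Otimes>\<^sub>M \<mu>))"
    using integrable_eta_mult_kernel[OF _ h]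
    by (simp add: eta2_def sum_distrib_right Bochner_Integration.integral_sum)
  finally show ?thesis .
qed

lemma integral_pair_D:
  fixes h :: "'a \<Rightarrow> 'a \<Rightarrow> real"
  assumes "(\<lambda>w. h (fst w) (snd w)) \<in> borel_measurable (MX \<Otimes>\<^sub>M MX)"
  shows "(\<integral>w. h (fst (fst w)) (fst (snd w)) \<partial>(D \<Otimes>\<^sub>M D)) = (\<integral>w. h (fst w) (snd w) \<partial>(\<mu> \<Otimes>\<^sub>M \<mu>))"
proof -
  interpret \<mu>: prob_space \<mu> by (rule prob_space_\<mu>)
  have "\<mu> \<Otimes>\<^sub>M \<mu> = distr (D \<Otimes>\<^sub>M D) (MX \<Otimes>\<^sub>M MX) (\<lambda>(z, z'). (fst z, fst z'))"
    unfolding \<mu>_def by (rule pair_measure_distr) (auto intro: \<mu>.sigma_finite_measure[unfolded \<mu>_def])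
  moreover have "(\<lambda>(z, z'). (fst z, fst z')) \<in> measurable (D \<Otimes>\<^sub>M D) (MX \<Otimes>\<^sub>M MX)"
    by measurable
  note integral_distr[OF this assms]
  ultimately show ?thesis
    by (simp add: case_prod_beta')
qed

lemma integral_eta:
  assumes k: "k \<in> {1..K}"
  shows "(\<integral>x. eta k x \<partial>\<mu>) = pk D k"
proof -
  have "(\<integral>x. eta k x \<partial>\<mu>) = (\<integral>x. indicator (space MX) x * eta k x \<partial>\<mu>)"
    by (rule Bochner_Integration.integral_cong) (auto simp: indicator_def)
  also have "\<dots> = measure D (space MX \<times> {k})"
    using measure_label_event[OF k, of "space MX"] by simp
  also have "space MX \<times> {k} = {z \<in> space D. snd z = k}"
    using k by (auto simp: space_D)
  finally show ?thesis by (simp add: pk_def)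
qed

lemma prob_same_label: "measure (D \<Otimes>\<^sub>M D) {w \<in> space (D \<Otimes>\<^sub>M D). same_label w} = pcoef D K"
proof -
  interpret \<mu>: prob_space \<mu> by (rule prob_space_\<mu>)
  interpret pair_sigma_finite \<mu> \<mu> ..
  have "measure (D \<Otimes>\<^sub>M D) {w \<in> space (D \<Otimes>\<^sub>M D). same_label w}
      = (\<integral>w. indicator {w \<in> space (D \<Otimes>\<^sub>M D). same_label w} w \<partial>(D \<Otimes>\<^sub>M D))"
    by simp
  also have "\<dots> = (\<integral>w. (if same_label w then (\<lambda>_ _. 1) (fst (fst w)) (fst (snd w)) else 0) \<partial>(D \<Otimes>\<^sub>M D))"
    by (rule Bochner_Integration.integral_cong) (auto simp: indicator_def)
  also have "\<dots> = (\<integral>w. (\<Sum>k\<in>{1..K}. eta k (fst w) * eta k (snd w)) \<partial>(\<mu> \<Otimes>\<^sub>M \<mu>))"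
    by (subst integral_same_label) (auto simp: bounded_kernel_def eta2_def)
  also have "\<dots> = (\<Sum>k\<in>{1..K}. \<integral>x. \<integral>y. eta k x * eta k y \<partial>\<mu> \<partial>\<mu>)"
    using integrable_eta_mult_eta
    by (simp add: Bochner_Integration.integral_sum integral_fst'[symmetric] case_prod_beta')
  also have "\<dots> = pcoef D K"
    by (simp add: integral_eta pcoef_def power2_eq_square)
  finally show ?thesis .
qed

lemma prob_not_same_label:
  "measure (D \<Otimes>\<^sub>M D) {w \<in> space (D \<Otimes>\<^sub>M D). \<not> same_label w} = 1 - pcoef D K"
proof -
  interpret DD: prob_space "D \<Otimes>\<^sub>M D" by (rule prob_space_pair_D)
  have "{w \<in> space (D \<Otimes>\<^sub>M D). \<not> same_label w} = space (D \<Otimes>\<^sub>M D) - {w \<in> space (D \<Otimes>\<^sub>M D). same_label w}"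
    by auto
  then show ?thesis
    using DD.prob_compl[of "{w \<in> space (D \<Otimes>\<^sub>M D). same_label w}"] prob_same_label by simp
qed

lemma measurable_eta2[measurable]: "(\<lambda>w. eta2 eta K (fst w) (snd w)) \<in> borel_measurable (MX \<Otimes>\<^sub>M MX)"
  unfolding eta2_def by (intro borel_measurable_sum) (auto intro!: borel_measurable_times)

lemma integrable_eta2_kernel:
  "bounded_kernel MX h \<Longrightarrow> integrable (\<mu> \<Otimes>\<^sub>M \<mu>) (\<lambda>w. eta2 eta K (fst w) (snd w) * h (fst w) (snd w))"
  unfolding eta2_def sum_distrib_right
  by (intro Bochner_Integration.integrable_sum integrable_eta_mult_kernel)

lemma Rplus_eq:
  "bounded_kernel MX h \<Longrightarrow>
    Rplus D h = (\<integral>w. eta2 eta K (fst w) (snd w) * h (fst w) (snd w) \<partial>(\<mu> \<Otimes>\<^sub>M \<mu>)) / pcoef D K"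
  unfolding Rplus_def by (simp add: integral_same_label prob_same_label)

lemma Rminus_eq:
  assumes h: "bounded_kernel MX h"
  shows "Rminus D h = ((\<integral>w. h (fst w) (snd w) \<partial>(\<mu> \<Otimes>\<^sub>M \<mu>))
    - (\<integral>w. eta2 eta K (fst w) (snd w) * h (fst w) (snd w) \<partial>(\<mu> \<Otimes>\<^sub>M \<mu>))) / (1 - pcoef D K)"
proof -
  interpret DD: prob_space "D \<Otimes>\<^sub>M D" by (rule prob_space_pair_D)
  have [measurable]: "(\<lambda>w. h (fst (fst w)) (fst (snd w))) \<in> borel_measurable (D \<Otimes>\<^sub>M D)"
    by (rule measurable_kernel_D[OF bounded_kernel_measurable[OF h]])
  have int_same: "integrable (D \<Otimes>\<^sub>M D) (\<lambda>w. if same_label w then h (fst (fst w)) (fst (snd w)) else 0)"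
    using integrable_kernel_D[OF h] by (rule Bochner_Integration.integrable_bound) auto
  have "(\<integral>w. (if same_label w then 0 else h (fst (fst w)) (fst (snd w))) \<partial>(D \<Otimes>\<^sub>M D))
      = (\<integral>w. h (fst (fst w)) (fst (snd w)) - (if same_label w then h (fst (fst w)) (fst (snd w)) else 0) \<partial>(D \<Otimes>\<^sub>M D))"
    by (rule Bochner_Integration.integral_cong) auto
  also have "\<dots> = (\<integral>w. h (fst w) (snd w) \<partial>(\<mu> \<Otimes>\<^sub>M \<mu>))
      - (\<integral>w. eta2 eta K (fst w) (snd w) * h (fst w) (snd w) \<partial>(\<mu> \<Otimes>\<^sub>M \<mu>))"
    using integrable_kernel_D[OF h] int_same bounded_kernel_measurable[OF h]
    by (simp add: integral_pair_D integral_same_label[OF h])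
  finally show ?thesis
    by (simp add: Rminus_def prob_not_same_label)
qed

lemma bounded_kernel_Sstar: "bounded_kernel MX (Sstar eta K Q)"
  unfolding Sstar_def by (rule bounded_kernel_unit_interval) (auto simp: case_prod_beta')

lemma risk_gap_eq_integral:
  fixes S :: "'a \<Rightarrow> 'a \<Rightarrow> real" and Q :: real
  assumes S_meas: "case_prod S \<in> borel_measurable (MX \<Otimes>\<^sub>M MX)"
    and S_range: "\<forall>x\<in>space MX. \<forall>y\<in>space MX. 0 \<le> S x y \<and> S x y \<le> 1"
    and p: "0 < pcoef D K" "pcoef D K < 1"
  defines "Ss \<equiv> Sstar eta K Q"
  shows "(1 - Q) * pcoef D K * (Rplus D Ss - Rplus D S) + (1 - pcoef D K) * Q * (Rminus D S - Rminus D Ss)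
    = (\<integral>w. \<bar>S (fst w) (snd w) - Ss (fst w) (snd w)\<bar> * \<bar>eta2 eta K (fst w) (snd w) - Q\<bar> \<partial>(\<mu> \<Otimes>\<^sub>M \<mu>))"
proof -
  let ?e = "\<lambda>w. eta2 eta K (fst w) (snd w)"
  have S: "bounded_kernel MX S"
    using S_meas S_range by (rule bounded_kernel_unit_interval)
  have Ss: "bounded_kernel MX Ss"
    unfolding Ss_def by (rule bounded_kernel_Sstar)
  define ES where "ES = (\<integral>w. ?e w * S (fst w) (snd w) \<partial>(\<mu> \<Otimes>\<^sub>M \<mu>))"
  define ESs where "ESs = (\<integral>w. ?e w * Ss (fst w) (snd w) \<partial>(\<mu> \<Otimes>\<^sub>M \<mu>))"
  define TS where "TS = (\<integral>w. S (fst w) (snd w) \<partial>(\<mu> \<Otimes>\<^sub>M \<mu>))"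
  define TSs where "TSs = (\<integral>w. Ss (fst w) (snd w) \<partial>(\<mu> \<Otimes>\<^sub>M \<mu>))"
  have "(\<integral>w. \<bar>S (fst w) (snd w) - Ss (fst w) (snd w)\<bar> * \<bar>?e w - Q\<bar> \<partial>(\<mu> \<Otimes>\<^sub>M \<mu>))
      = (\<integral>w. ?e w * Ss (fst w) (snd w) - ?e w * S (fst w) (snd w) - Q * Ss (fst w) (snd w)
            + Q * S (fst w) (snd w) \<partial>(\<mu> \<Otimes>\<^sub>M \<mu>))"
    using S_range abs_diff_Sstar_mult
    by (intro Bochner_Integration.integral_cong) (auto simp: space_pair_measure Ss_def Sstar_def algebra_simps)
  also have "\<dots> = ESs - ES - Q * TSs + Q * TS"
    using integrable_eta2_kernel[OF S] integrable_eta2_kernel[OF Ss] integrable_kernel[OF S] integrable_kernel[OF Ss]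
    by (simp add: ES_def ESs_def TS_def TSs_def)
  moreover have "(1 - Q) * pcoef D K * (Rplus D Ss - Rplus D S) = (1 - Q) * (ESs - ES)"
    using p by (simp add: Rplus_eq[OF S] Rplus_eq[OF Ss] ES_def ESs_def flip: diff_divide_distrib)
  moreover have "(1 - pcoef D K) * Q * (Rminus D S - Rminus D Ss) = Q * ((TS - ES) - (TSs - ESs))"
    using p by (simp add: Rminus_eq[OF S] Rminus_eq[OF Ss] ES_def ESs_def TS_def TSs_def
      flip: diff_divide_distrib)
  ultimately show ?thesis
    by (simp add: algebra_simps)
qed

lemma measurable_integral_slice:
  fixes h :: "'a \<Rightarrow> 'a \<Rightarrow> real"
  assumes "(\<lambda>w. h (fst w) (snd w)) \<in> borel_measurable (MX \<Otimes>\<^sub>M MX)"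
  shows "(\<lambda>y. \<integral>x. h x y \<partial>\<mu>) \<in> borel_measurable MX"
proof -
  interpret \<mu>: prob_space \<mu> by (rule prob_space_\<mu>)
  have "(\<lambda>w. (snd w, fst w)) \<in> measurable (MX \<Otimes>\<^sub>M \<mu>) (MX \<Otimes>\<^sub>M MX)"
    by measurable
  from measurable_compose[OF this assms] have "(\<lambda>(y, x). h x y) \<in> borel_measurable (MX \<Otimes>\<^sub>M \<mu>)"
    by (simp add: case_prod_beta' comp_def)
  then show ?thesis
    by (rule \<mu>.borel_measurable_lebesgue_integral)
qed

lemma integral_abs_slice_le:
  fixes f :: "'a \<Rightarrow> 'a \<Rightarrow> real"
  assumes f_meas: "(\<lambda>w. f (fst w) (snd w)) \<in> borel_measurable (MX \<Otimes>\<^sub>M MX)"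
    and f_bound: "\<forall>x\<in>space MX. \<forall>y\<in>space MX. \<bar>f x y\<bar> \<le> B" and y: "y \<in> space MX"
  shows "(\<integral>x. \<bar>f x y\<bar> \<partial>\<mu>) \<le> B"
proof -
  interpret \<mu>: prob_space \<mu> by (rule prob_space_\<mu>)
  have "integrable \<mu> (\<lambda>x. \<bar>f x y\<bar>)"
    using f_bound y measurable_kernel_slice[OF f_meas y]
    by (intro \<mu>.integrable_const_bound[where B=B] AE_I2) auto
  then have "(\<integral>x. \<bar>f x y\<bar> \<partial>\<mu>) \<le> (\<integral>x. B \<partial>\<mu>)"
    using f_bound y by (intro integral_mono) auto
  then show ?thesis
    using \<mu>.prob_space by simp
qed

lemma integrable_sq_integral_abs_slice:
  fixes f :: "'a \<Rightarrow> 'a \<Rightarrow> real"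
  assumes f_meas: "(\<lambda>w. f (fst w) (snd w)) \<in> borel_measurable (MX \<Otimes>\<^sub>M MX)"
    and f_bound: "\<forall>x\<in>space MX. \<forall>y\<in>space MX. \<bar>f x y\<bar> \<le> B"
  shows "integrable \<mu> (\<lambda>y. (\<integral>x. \<bar>f x y\<bar> \<partial>\<mu>)\<^sup>2)"
proof -
  interpret \<mu>: prob_space \<mu> by (rule prob_space_\<mu>)
  show ?thesis
  proof (rule \<mu>.integrable_const_bound[where B="B\<^sup>2"])
    show "AE y in \<mu>. norm ((\<integral>x. \<bar>f x y\<bar> \<partial>\<mu>)\<^sup>2) \<le> B\<^sup>2"
      using integral_abs_slice_le[OF f_meas f_bound]
      by (intro AE_I2) (simp add: abs_le_square_iff[symmetric] integral_nonneg order.trans[OF _ abs_ge_self])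
    show "(\<lambda>y. (\<integral>x. \<bar>f x y\<bar> \<partial>\<mu>)\<^sup>2) \<in> borel_measurable \<mu>"
      using measurable_integral_slice[of "\<lambda>x y. \<bar>f x y\<bar>"] f_meas by simp
  qed
qed

lemma measurable_label_match:
  fixes f :: "'a \<Rightarrow> 'a \<Rightarrow> real"
  assumes f: "(\<lambda>w. f (fst w) (snd w)) \<in> borel_measurable (MX \<Otimes>\<^sub>M MX)"
  shows "(\<lambda>w. (if same_label w then 1 else 0) * f (fst (fst w)) (fst (snd w))) \<in> borel_measurable (D \<Otimes>\<^sub>M D)"
proof -
  note [measurable] = measurable_kernel_D[OF f]
  show ?thesis by measurable
qed

lemma integrable_label_match:
  assumes f: "bounded_kernel MX f" and z': "z' \<in> space D"
  shows "integrable D (\<lambda>z. (if snd z = snd z' then 1 else 0) * f (fst z) (fst z'))"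
proof -
  interpret D: prob_space D by (rule prob_space_D)
  obtain B where "0 \<le> B" and B: "\<forall>x\<in>space MX. \<forall>y\<in>space MX. \<bar>f x y\<bar> \<le> B"
    using bounded_kernel_bound[OF f] by blast
  have "(\<lambda>z. (if same_label (z, z') then 1 else 0) * f (fst z) (fst z')) \<in> borel_measurable D"
    using measurable_compose[OF measurable_Pair2'[OF z'] measurable_label_match[OF bounded_kernel_measurable[OF f]]]
    by simp
  then show ?thesis
    using \<open>0 \<le> B\<close> B z' by (intro D.integrable_const_bound[where B=B] AE_I2) (auto simp: same_label_def space_D)
qed

lemma qS_eq:
  assumes S: "bounded_kernel MX S" and S': "bounded_kernel MX S'" and z': "z' \<in> space D"
  shows "qS D S S' z' = (\<integral>z. (if snd z = snd z' then 1 else 0) * (S (fst z) (fst z') - S' (fst z) (fst z')) \<partial>D)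
    - (\<integral>w. (if same_label w then 1 else 0) * (S (fst (fst w)) (fst (snd w)) - S' (fst (fst w)) (fst (snd w)))
        \<partial>(D \<Otimes>\<^sub>M D))"
proof -
  interpret D: prob_space D by (rule prob_space_D)
  show ?thesis
    using integrable_label_match[OF bounded_kernel_diff[OF S S'] z'] by (simp add: qS_def QS_def D.prob_space)
qed

lemma abs_integral_label_match_le:
  assumes f: "bounded_kernel MX f" and z': "z' \<in> space D"
  shows "\<bar>\<integral>z. (if snd z = snd z' then 1 else 0) * f (fst z) (fst z') \<partial>D\<bar> \<le> (\<integral>x. \<bar>f x (fst z')\<bar> \<partial>\<mu>)"
proof -
  interpret D: prob_space D by (rule prob_space_D)
  obtain B where B: "\<forall>x\<in>space MX. \<forall>y\<in>space MX. \<bar>f x y\<bar> \<le> B"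
    using bounded_kernel_bound[OF f] by blast
  have [measurable]: "(\<lambda>x. f x (fst z')) \<in> borel_measurable MX"
    using z' by (intro measurable_kernel_slice[OF bounded_kernel_measurable[OF f]]) (auto simp: space_D)
  have "\<bar>\<integral>z. (if snd z = snd z' then 1 else 0) * f (fst z) (fst z') \<partial>D\<bar>
      \<le> (\<integral>z. \<bar>(if snd z = snd z' then 1 else 0) * f (fst z) (fst z')\<bar> \<partial>D)"
    using integral_norm_bound[of D "\<lambda>z. (if snd z = snd z' then 1 else 0) * f (fst z) (fst z')"] by simp
  also have "\<dots> \<le> (\<integral>z. \<bar>f (fst z) (fst z')\<bar> \<partial>D)"
  proof (rule integral_mono)
    show "integrable D (\<lambda>z. \<bar>f (fst z) (fst z')\<bar>)"
      using B z' by (intro D.integrable_const_bound[where B=B] AE_I2) (auto simp: space_D)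
  qed (use integrable_label_match[OF f z'] in auto)
  also have "\<dots> = (\<integral>x. \<bar>f x (fst z')\<bar> \<partial>\<mu>)"
    unfolding \<mu>_def by (simp add: integral_distr)
  finally show ?thesis .
qed

lemma measurable_qS:
  assumes S: "bounded_kernel MX S" and S': "bounded_kernel MX S'"
  shows "qS D S S' \<in> borel_measurable D"
proof -
  interpret D: prob_space D by (rule prob_space_D)
  define J where "J w = (if same_label w then 1 else 0)
    * (S (fst (fst w)) (fst (snd w)) - S' (fst (fst w)) (fst (snd w)))" for w
  have [measurable]: "J \<in> borel_measurable (D \<Otimes>\<^sub>M D)"
    unfolding J_def by (rule measurable_label_match) (use bounded_kernel_measurable[OF bounded_kernel_diff[OF S S']] in simp)
  have "(\<lambda>(z', z). J (z, z')) \<in> borel_measurable (D \<Otimes>\<^sub>M D)"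
    by measurable
  then have "(\<lambda>z'. (\<integral>z. J (z, z') \<partial>D) - (\<integral>w. J w \<partial>(D \<Otimes>\<^sub>M D))) \<in> borel_measurable D"
    by measurable
  then show ?thesis
    by (rule measurable_cong[THEN iffD1, rotated])
       (simp add: qS_eq[OF S S'] J_def same_label_def)
qed

lemma variance_qS_le:
  fixes S S' :: "'a \<Rightarrow> 'a \<Rightarrow> real"
  assumes S: "bounded_kernel MX S" and S': "bounded_kernel MX S'"
  shows "(\<integral>z. (qS D S S' z - (\<integral>z'. qS D S S' z' \<partial>D))\<^sup>2 \<partial>D)
    \<le> (\<integral>y. (\<integral>x. \<bar>S x y - S' x y\<bar> \<partial>\<mu>)\<^sup>2 \<partial>\<mu>)"
proof -
  interpret D: prob_space D by (rule prob_space_D)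
  define f where "f x y = S x y - S' x y" for x y
  have f: "bounded_kernel MX f"
    unfolding f_def using S S' by (rule bounded_kernel_diff)
  obtain B where B: "\<forall>x\<in>space MX. \<forall>y\<in>space MX. \<bar>f x y\<bar> \<le> B"
    using bounded_kernel_bound[OF f] by blast
  define G where "G y = (\<integral>x. \<bar>f x y\<bar> \<partial>\<mu>)" for y
  define C where "C = (\<integral>w. (if same_label w then 1 else 0) * f (fst (fst w)) (fst (snd w)) \<partial>(D \<Otimes>\<^sub>M D))"
  have [measurable]: "G \<in> borel_measurable MX"
    unfolding G_def using bounded_kernel_measurable[OF f] by (intro measurable_integral_slice) measurable
  have int_G2: "integrable \<mu> (\<lambda>y. (G y)\<^sup>2)"
    unfolding G_def by (rule integrable_sq_integral_abs_slice[OF bounded_kernel_measurable[OF f] B])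
  have "(\<integral>z. (qS D S S' z - (\<integral>z'. qS D S S' z' \<partial>D))\<^sup>2 \<partial>D) \<le> (\<integral>z. (G (fst z))\<^sup>2 \<partial>D)"
  proof (rule D.variance_le_of_abs_diff_le[where C="- C"])
    show "qS D S S' \<in> borel_measurable D"
      by (rule measurable_qS[OF S S'])
    show "integrable D (\<lambda>z. (G (fst z))\<^sup>2)"
      using int_G2 unfolding \<mu>_def by (subst (asm) integrable_distr_eq) auto
    show "\<forall>z\<in>space D. \<bar>qS D S S' z - - C\<bar> \<le> G (fst z)"
      using abs_integral_label_match_le[OF f] by (simp add: qS_eq[OF S S'] C_def G_def f_def)
  qed
  also have "\<dots> = (\<integral>y. (G y)\<^sup>2 \<partial>\<mu>)"
    unfolding \<mu>_def by (simp add: integral_distr)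
  finally show ?thesis
    by (simp add: G_def f_def)
qed

lemma measurable_eta2_right[measurable]: "eta2 eta K y \<in> borel_measurable MX"
  unfolding eta2_def by (intro borel_measurable_sum) (auto intro!: borel_measurable_times)

lemma sq_integral_slice_le_noise:
  fixes F :: "'a \<Rightarrow> 'a \<Rightarrow> real"
  assumes F_meas: "(\<lambda>w. F (fst w) (snd w)) \<in> borel_measurable (MX \<Otimes>\<^sub>M MX)"
    and F_bound: "\<forall>x\<in>space MX. \<forall>y\<in>space MX. \<bar>F x y\<bar> \<le> 1"
    and y: "y \<in> space MX" and a: "0 \<le> a" "a \<le> 1"
    and noise: "(\<integral>\<^sup>+x. negpow a (eta2 eta K y x - Q) \<partial>\<mu>) \<le> ennreal c"
  shows "(\<integral>x. \<bar>F x y\<bar> \<partial>\<mu>)\<^sup>2 \<le> c * pow0 (\<integral>x. \<bar>F x y\<bar> * \<bar>eta2 eta K x y - Q\<bar> \<partial>\<mu>) a"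
proof -
  interpret \<mu>: prob_space \<mu> by (rule prob_space_\<mu>)
  have "integrable \<mu> (\<lambda>x. eta2 eta K x y - Q)"
    unfolding eta2_def by (intro Bochner_Integration.integrable_diff Bochner_Integration.integrable_sum
        integrable_mult_left integrable_eta \<mu>.integrable_const)
  moreover have "(\<lambda>x. \<bar>F x y\<bar>) \<in> borel_measurable \<mu>"
    using measurable_kernel_slice[OF F_meas y] by simp
  ultimately show ?thesis
    using noise F_bound y a
    by (intro \<mu>.sq_integral_le_pow0_integral) (auto simp: eta2_commute[of _ _ y])
qed

lemma integrable_abs_kernel_mult_abs_eta2:
  assumes F: "bounded_kernel MX F"
  shows "integrable (\<mu> \<Otimes>\<^sub>M \<mu>) (\<lambda>(x, y). \<bar>F x y\<bar> * \<bar>eta2 eta K x y - Q\<bar>)"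
proof -
  have "integrable (\<mu> \<Otimes>\<^sub>M \<mu>) (\<lambda>w. \<bar>eta2 eta K (fst w) (snd w) * F (fst w) (snd w) - Q * F (fst w) (snd w)\<bar>)"
    using integrable_eta2_kernel[OF F] integrable_kernel[OF F] by auto
  then show ?thesis
    by (rule Bochner_Integration.integrable_cong[THEN iffD1, rotated -1])
       (auto simp: case_prod_beta' abs_mult[symmetric] algebra_simps)
qed

lemma variance_qS_le_risk_gap:
  fixes S :: "'a \<Rightarrow> 'a \<Rightarrow> real" and Q a c :: real
  assumes S_meas: "case_prod S \<in> borel_measurable (MX \<Otimes>\<^sub>M MX)"
    and S_range: "\<forall>x\<in>space MX. \<forall>y\<in>space MX. 0 \<le> S x y \<and> S x y \<le> 1"
    and p: "0 < pcoef D K" "pcoef D K < 1" and a: "0 \<le> a" "a \<le> 1"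
    and noise: "AE y in \<mu>. (\<integral>\<^sup>+x. negpow a (eta2 eta K y x - Q) \<partial>\<mu>) \<le> ennreal c"
  defines "Ss \<equiv> Sstar eta K Q"
  shows "(\<integral>z. (qS D S Ss z - (\<integral>z'. qS D S Ss z' \<partial>D))\<^sup>2 \<partial>D)
    \<le> c * pow0 ((1 - Q) * pcoef D K * (Rplus D Ss - Rplus D S)
                 + (1 - pcoef D K) * Q * (Rminus D S - Rminus D Ss)) a"
proof -
  interpret \<mu>: prob_space \<mu> by (rule prob_space_\<mu>)
  interpret \<mu>\<mu>: pair_sigma_finite \<mu> \<mu> ..
  have S: "bounded_kernel MX S"
    using S_meas S_range by (rule bounded_kernel_unit_interval)
  define F where "F x y = S x y - Ss x y" for x y
  have F: "bounded_kernel MX F"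
    unfolding F_def Ss_def using S bounded_kernel_Sstar by (rule bounded_kernel_diff)
  have F_bound: "\<forall>x\<in>space MX. \<forall>y\<in>space MX. \<bar>F x y\<bar> \<le> 1"
    using S_range by (auto simp: F_def Ss_def Sstar_def)
  define G where "G y = (\<integral>x. \<bar>F x y\<bar> \<partial>\<mu>)" for y
  define H where "H y = (\<integral>x. \<bar>F x y\<bar> * \<bar>eta2 eta K x y - Q\<bar> \<partial>\<mu>)" for y
  have "AE y in \<mu>. 0 < c"
    using noise by eventually_elim (rule \<mu>.pos_of_negpow_moment_le[rotated], measurable)
  then have "0 < c" by simp
  note int_F_eta2 = integrable_abs_kernel_mult_abs_eta2[OF F]
  have int_H: "integrable \<mu> H" and H0: "\<forall>y\<in>space \<mu>. 0 \<le> H y"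
    using \<mu>\<mu>.integrable_snd[OF int_F_eta2] by (simp_all add: H_def[abs_def])
  have "(\<integral>z. (qS D S Ss z - (\<integral>z'. qS D S Ss z' \<partial>D))\<^sup>2 \<partial>D) \<le> (\<integral>y. (G y)\<^sup>2 \<partial>\<mu>)"
    unfolding G_def F_def Ss_def by (rule variance_qS_le[OF S bounded_kernel_Sstar])
  also have "\<dots> \<le> (\<integral>y. c * pow0 (H y) a \<partial>\<mu>)"
  proof (rule integral_mono_AE)
    show "integrable \<mu> (\<lambda>y. (G y)\<^sup>2)"
      unfolding G_def by (rule integrable_sq_integral_abs_slice[OF bounded_kernel_measurable[OF F] F_bound])
    show "integrable \<mu> (\<lambda>y. c * pow0 (H y) a)"
      using \<mu>.integral_pow0_le_pow0_integral(1)[OF int_H H0 a] by simp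
    show "AE y in \<mu>. (G y)\<^sup>2 \<le> c * pow0 (H y) a"
      using noise AE_space by eventually_elim
        (simp add: G_def H_def sq_integral_slice_le_noise[OF bounded_kernel_measurable[OF F] F_bound _ a])
  qed
  also have "\<dots> \<le> c * pow0 (\<integral>y. H y \<partial>\<mu>) a"
    using \<mu>.integral_pow0_le_pow0_integral(2)[OF int_H H0 a] \<open>0 < c\<close> by simp
  also have "(\<integral>y. H y \<partial>\<mu>) = (\<integral>w. \<bar>F (fst w) (snd w)\<bar> * \<bar>eta2 eta K (fst w) (snd w) - Q\<bar> \<partial>(\<mu> \<Otimes>\<^sub>M \<mu>))"
    using \<mu>\<mu>.integral_snd[OF int_F_eta2] by (simp add: H_def case_prod_beta')
  also have "\<dots> = (1 - Q) * pcoef D K * (Rplus D Ss - Rplus D S)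
                 + (1 - pcoef D K) * Q * (Rminus D S - Rminus D Ss)"
    unfolding F_def Ss_def using risk_gap_eq_integral[OF S_meas S_range p] by simp
  finally show ?thesis .
qed

end

theorem lemma3:
  fixes MX :: "'a::euclidean_space measure"
    and D :: "('a \<times> nat) measure"
    and K :: nat
    and eta :: "nat \<Rightarrow> 'a \<Rightarrow> real"
    and \<alpha> \<kappa> c a :: real
    and S0 :: "('a \<Rightarrow> 'a \<Rightarrow> real) set"
    and S :: "'a \<Rightarrow> 'a \<Rightarrow> real"
  assumes MX_borel: "sets MX = sets (restrict_space borel (space MX))"
    and D_prob: "prob_space D"
    and D_sets: "sets D = sets (MX \<Otimes>\<^sub>M count_space {1..K})"
    and pk_pos: "\<forall>k\<in>{1..K}. pk D k > 0"
    and eta_cond: "cond_prob_version MX D K eta"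
    and F_cont: "continuous_on UNIV (cdf_neg D eta K)"
    and F_strict: "strict_mono_on {t. 0 < cdf_neg D eta K t \<and> cdf_neg D eta K t < 1} (cdf_neg D eta K)"
    and alpha: "0 < \<alpha>" "\<alpha> < 1"
    and S0_meas: "\<forall>f\<in>S0. (\<lambda>(x, x'). f x x') \<in> borel_measurable (MX \<Otimes>\<^sub>M MX)"
    and S0_range: "\<forall>f\<in>S0. \<forall>x\<in>space MX. \<forall>x'\<in>space MX. 0 \<le> f x x' \<and> f x x' \<le> 1"
    and S0_VC: "VC_major_on (space MX \<times> space MX) ((\<lambda>f. \<lambda>(x, x'). f x x') ` S0)"
    and kappa: "0 < \<kappa>" "\<kappa> < 1" "\<kappa> \<le> pcoef D K" "pcoef D K \<le> 1 - \<kappa>"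
    and a_range: "0 \<le> a" "a \<le> 1"
    and noise: "AE x in distr D MX fst.
                  (\<integral>\<^sup>+ x'. negpow a (eta2 eta K x x' - Qstar D eta K \<alpha>) \<partial>(distr D MX fst))
                  \<le> ennreal c"
    and Sstar_in: "\<exists>f\<in>S0. \<forall>x\<in>space MX. \<forall>x'\<in>space MX.
                     f x x' = Sstar eta K (Qstar D eta K \<alpha>) x x'"
    and S_in: "S \<in> S0"
  shows "(let Q = Qstar D eta K \<alpha>; Ss = Sstar eta K Q; p = pcoef D K; q = qS D S Ss
          in (\<integral>z. (q z - (\<integral>z'. q z' \<partial>D))\<^sup>2 \<partial>D)
             \<le> c * pow0 ((1 - Q) * p * (Rplus D Ss - Rplus D S)
                          + (1 - p) * Q * (Rminus D S - Rminus D Ss)) a)"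
proof -
  interpret classification_model MX D K eta
    using D_prob D_sets eta_cond by (rule classification_model.intro)
  have "case_prod S \<in> borel_measurable (MX \<Otimes>\<^sub>M MX)"
    and "\<forall>x\<in>space MX. \<forall>y\<in>space MX. 0 \<le> S x y \<and> S x y \<le> 1"
    using S0_meas S0_range S_in by auto
  moreover have "0 < pcoef D K" "pcoef D K < 1"
    using kappa by auto
  ultimately show ?thesis
    unfolding Let_def using variance_qS_le_risk_gap[OF _ _ _ _ a_range noise[folded \<mu>_def]] by simp
qed

end
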